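(* Let $\mathcal A$ be a transitive Lie algebroid with kernel $\mathcal L$, let $\phi:\mathcal A\to\mathfrak D(E)$ be a representation of $\mathcal A$ on a vector bundle $E\to M$ and $\phi_{\mathcal L}=\phi\circ\iota$. Let $\widehat\omega\in\Omega^1(\mathcal A,\mathcal L)$ be a (generalized) connection with reduced kernel endomorphism $\tau$, $\mathring\omega$ a background ordinary connection, and $\omega=\widehat\omega+\tau\circ\mathring\omega$ the induced ordinary connection with splitting $\nabla$; let $\widehat C(X)=X+\iota\widehat\omega(X)$. Then $\varphi\mapsto\widehat\nabla^E\varphi$, $(\widehat\nabla^E\varphi)(X)=\phi(\widehat C(X))\varphi$, defines a covariant derivative $\widehat\nabla^E:\Gamma(E)\to\Omega^1(\mathcal A,E)$ (i.e. $C^\infty(M)$-linear in $X$ and $\widehat\nabla^E_X(f\varphi)=f\widehat\nabla^E_X\varphi+(\rho(X)f)\varphi$), and $$(\widehat\nabla^E\varphi)(X)=\phi(\nabla_{\rho(X)})\varphi-\phi_{\mathcal L}\big(\tau(\mathring\omega(X))\big)\varphi\qquad(X\in\mathcal A).$$ Moreover, under an infinitesimal gauge transformation by $\xi\in\mathcal L$ ($\widehat\omega\mapsto\widehat\omega^\xi$, $\varphi\mapsto\varphi-\phi_{\mathcal L}(\xi)\varphi$, $\mathring\omega$ fixed), each of the two terms $T$ on the right-hand side transforms homogeneously, $T\mapsto T-\phi_{\mathcal L}(\xi)T$ to first order in $\xi$.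
   Context: A transitive Lie algebroid over $M$: finitely generated projective $C^\infty(M)$-module $\mathcal A$ with Lie bracket and surjective $C^\infty(M)$-linear Lie morphism $\rho:\mathcal A\to\Gamma(TM)$, $[X,fY]=f[X,Y]+(\rho(X)f)Y$; kernel $\mathcal L=\ker\rho$, inclusion $\iota$. $\mathfrak D(E)$ is the Lie algebra of first-order differential operators $D$ on $\Gamma(E)$ whose symbol is scalar, i.e. $D(f\varphi)=fD\varphi+(X_D f)\varphi$ for a vector field $X_D$. A representation of $\mathcal A$ on $E$ is a $C^\infty(M)$-linear Lie algebra morphism $\phi:\mathcal A\to\mathfrak D(E)$ with $X_{\phi(X)}=\rho(X)$; then $\phi_{\mathcal L}=\phi\circ\iota$ takes values in $\Gamma(\mathrm{End}E)$. $\Omega^1(\mathcal A,E)$: $C^\infty(M)$-linear maps $\mathcal A\to\Gamma(E)$. A (generalized) connection is any $\widehat\omega\in\Omega^1(\mathcal A,\mathcal L)$ ($C^\infty(M)$-linear $\mathcal A\to\mathcal L$); infinitesimal gauge transformation: $\widehat\omega^\xi(X)=\widehat\omega(X)+[X,\iota\xi]+[\widehat\omega(X),\xi]$. Reduced kernel endomorphism $\tau=\widehat\omega\circ\iota+\mathrm{Id}_{\mathcal L}$, transforming as $\tau\mapsto\tau+[\tau,\xi]$. An ordinary connection is a $C^\infty(M)$-linear splitting $\nabla$ of $\rho$, with 1-form $\omega$ given by $X=\nabla_{\rho X}-\iota\omega(X)$; a background connection $\mathring\omega$ is such a 1-form, and $\widehat\omega+\tau\circ\mathring\omega$ is then an ordinary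 connection. *)

theory Defs
  imports Main "HOL.Real_Vector_Spaces"
begin

text \<open>Algebraic (Lie-Rinehart style) model.  The commutative real algebra
  'r plays the role of C^\<infinity>(M); vector fields Gamma(TM) are the real-linear
  derivations of 'r; modules over C^\<infinity>(M) are abelian groups with an
  action of 'r.  The kernel L of the anchor is the sub-module ker rho of A,
  and iota is the inclusion.\<close>

definition der_R :: "('r::{comm_ring_1,real_algebra_1} \<Rightarrow> 'r) \<Rightarrow> bool" where
  "der_R D \<longleftrightarrow> (\<forall>f g. D (f + g) = D f + D g) \<and> (\<forall>t f. D (scaleR t f) = scaleR t (D f))
     \<and> (\<forall>f g. D (f * g) = f * D g + D f * g)"

definition rmodule :: "('r::{comm_ring_1,real_algebra_1} \<Rightarrow> 'm::ab_group_add \<Rightarrow> 'm) \<Rightarrow> bool" where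
  "rmodule act \<longleftrightarrow> (\<forall>f x y. act f (x + y) = act f x + act f y)
     \<and> (\<forall>f g x. act (f + g) x = act f x + act g x)
     \<and> (\<forall>f g x. act (f * g) x = act f (act g x)) \<and> (\<forall>x. act 1 x = x)"

text \<open>Finitely generated projective, via the dual basis lemma.\<close>
definition fg_projective :: "('r::{comm_ring_1,real_algebra_1} \<Rightarrow> 'm::ab_group_add \<Rightarrow> 'm) \<Rightarrow> bool" where
  "fg_projective act \<longleftrightarrow> (\<exists>(n::nat) (e::nat \<Rightarrow> 'm) (\<alpha>::nat \<Rightarrow> 'm \<Rightarrow> 'r).
     (\<forall>i<n. (\<forall>x y. \<alpha> i (x + y) = \<alpha> i x + \<alpha> i y) \<and> (\<forall>f x. \<alpha> i (act f x) = f * \<alpha> i x))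
     \<and> (\<forall>x. x = (\<Sum>i<n. act (\<alpha> i x) (e i))))"

definition rlinear :: "('r \<Rightarrow> 'm::ab_group_add \<Rightarrow> 'm) \<Rightarrow> ('r \<Rightarrow> 'n::ab_group_add \<Rightarrow> 'n) \<Rightarrow> ('m \<Rightarrow> 'n) \<Rightarrow> bool" where
  "rlinear act1 act2 F \<longleftrightarrow> (\<forall>x y. F (x + y) = F x + F y) \<and> (\<forall>f x. F (act1 f x) = act2 f (F x))"

definition lie_bracket :: "('r::{comm_ring_1,real_algebra_1} \<Rightarrow> 'a::ab_group_add \<Rightarrow> 'a) \<Rightarrow> ('a \<Rightarrow> 'a \<Rightarrow> 'a) \<Rightarrow> bool" where
  "lie_bracket act br \<longleftrightarrow> (\<forall>x y z. br (x + y) z = br x z + br y z)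
     \<and> (\<forall>x y z. br x (y + z) = br x y + br x z)
     \<and> (\<forall>t x y. br (act (of_real t) x) y = act (of_real t) (br x y))
     \<and> (\<forall>t x y. br x (act (of_real t) y) = act (of_real t) (br x y))
     \<and> (\<forall>x. br x x = 0)
     \<and> (\<forall>x y z. br x (br y z) + br y (br z x) + br z (br x y) = 0)"

definition transitive_lie_algebroid ::
  "('r::{comm_ring_1,real_algebra_1} \<Rightarrow> 'a::ab_group_add \<Rightarrow> 'a) \<Rightarrow> ('a \<Rightarrow> 'a \<Rightarrow> 'a) \<Rightarrow> ('a \<Rightarrow> 'r \<Rightarrow> 'r) \<Rightarrow> bool" where
  "transitive_lie_algebroid act br \<rho> \<longleftrightarrow>
     rmodule act \<and> fg_projective act \<and> lie_bracket act br
     \<and> (\<forall>X. der_R (\<rho> X))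
     \<and> (\<forall>X Y g. \<rho> (X + Y) g = \<rho> X g + \<rho> Y g)
     \<and> (\<forall>f X g. \<rho> (act f X) g = f * \<rho> X g)
     \<and> (\<forall>X Y g. \<rho> (br X Y) g = \<rho> X (\<rho> Y g) - \<rho> Y (\<rho> X g))
     \<and> (\<forall>X f Y. br X (act f Y) = act f (br X Y) + act (\<rho> X f) Y)
     \<and> (\<forall>D. der_R D \<longrightarrow> (\<exists>X. \<rho> X = D))"

definition kerL :: "('a \<Rightarrow> 'r::zero \<Rightarrow> 'r) \<Rightarrow> 'a set" where
  "kerL \<rho> = {X. \<rho> X = (\<lambda>_. 0)}"

definition diffop_with_symbol ::
  "('r::{comm_ring_1,real_algebra_1} \<Rightarrow> 's::ab_group_add \<Rightarrow> 's) \<Rightarrow> ('s \<Rightarrow> 's) \<Rightarrow> ('r \<Rightarrow> 'r) \<Rightarrow> bool" where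
  "diffop_with_symbol actS D V \<longleftrightarrow> der_R V \<and> (\<forall>p q. D (p + q) = D p + D q)
     \<and> (\<forall>f p. D (actS f p) = actS f (D p) + actS (V f) p)"

definition representation ::
  "('r::{comm_ring_1,real_algebra_1} \<Rightarrow> 'a::ab_group_add \<Rightarrow> 'a) \<Rightarrow> ('a \<Rightarrow> 'a \<Rightarrow> 'a) \<Rightarrow> ('a \<Rightarrow> 'r \<Rightarrow> 'r)
    \<Rightarrow> ('r \<Rightarrow> 's::ab_group_add \<Rightarrow> 's) \<Rightarrow> ('a \<Rightarrow> 's \<Rightarrow> 's) \<Rightarrow> bool" where
  "representation act br \<rho> actS \<phi> \<longleftrightarrow>
     (\<forall>X. diffop_with_symbol actS (\<phi> X) (\<rho> X))
     \<and> (\<forall>X Y p. \<phi> (X + Y) p = \<phi> X p + \<phi> Y p)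
     \<and> (\<forall>f X p. \<phi> (act f X) p = actS f (\<phi> X p))
     \<and> (\<forall>X Y p. \<phi> (br X Y) p = \<phi> X (\<phi> Y p) - \<phi> Y (\<phi> X p))"

definition gen_connection :: "('r \<Rightarrow> 'a::ab_group_add \<Rightarrow> 'a) \<Rightarrow> ('a \<Rightarrow> 'r::zero \<Rightarrow> 'r) \<Rightarrow> ('a \<Rightarrow> 'a) \<Rightarrow> bool" where
  "gen_connection act \<rho> \<omega> \<longleftrightarrow> rlinear act act \<omega> \<and> (\<forall>X. \<omega> X \<in> kerL \<rho>)"

definition splitting ::
  "('r::{comm_ring_1,real_algebra_1} \<Rightarrow> 'a::ab_group_add \<Rightarrow> 'a) \<Rightarrow> ('a \<Rightarrow> 'r \<Rightarrow> 'r) \<Rightarrow> (('r \<Rightarrow> 'r) \<Rightarrow> 'a) \<Rightarrow> bool" where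
  "splitting act \<rho> nab \<longleftrightarrow> (\<forall>D. der_R D \<longrightarrow> \<rho> (nab D) = D)
     \<and> (\<forall>D1 D2. der_R D1 \<longrightarrow> der_R D2 \<longrightarrow> nab (\<lambda>g. D1 g + D2 g) = nab D1 + nab D2)
     \<and> (\<forall>f D. der_R D \<longrightarrow> nab (\<lambda>g. f * D g) = act f (nab D))"

definition ordinary_connection_form ::
  "('r::{comm_ring_1,real_algebra_1} \<Rightarrow> 'a::ab_group_add \<Rightarrow> 'a) \<Rightarrow> ('a \<Rightarrow> 'r \<Rightarrow> 'r) \<Rightarrow> ('a \<Rightarrow> 'a) \<Rightarrow> bool" where
  "ordinary_connection_form act \<rho> \<omega> \<longleftrightarrow> gen_connection act \<rho> \<omega> \<and>
     (\<exists>nab. splitting act \<rho> nab \<and> (\<forall>X. X = nab (\<rho> X) - \<omega> X))"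

definition tau :: "('a::ab_group_add \<Rightarrow> 'a) \<Rightarrow> 'a \<Rightarrow> 'a" where
  "tau \<omega>h \<eta> = \<omega>h \<eta> + \<eta>"

definition omega_ind :: "('a::ab_group_add \<Rightarrow> 'a) \<Rightarrow> ('a \<Rightarrow> 'a) \<Rightarrow> 'a \<Rightarrow> 'a" where
  "omega_ind \<omega>h \<omega>r X = \<omega>h X + tau \<omega>h (\<omega>r X)"

definition Chat :: "('a::ab_group_add \<Rightarrow> 'a) \<Rightarrow> 'a \<Rightarrow> 'a" where
  "Chat \<omega>h X = X + \<omega>h X"

definition nablaE :: "('a \<Rightarrow> 's \<Rightarrow> 's) \<Rightarrow> ('a::ab_group_add \<Rightarrow> 'a) \<Rightarrow> 's \<Rightarrow> 'a \<Rightarrow> 's" where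
  "nablaE \<phi> \<omega>h p X = \<phi> (Chat \<omega>h X) p"

definition gauge_omega :: "('a \<Rightarrow> 'a \<Rightarrow> 'a) \<Rightarrow> ('a::ab_group_add \<Rightarrow> 'a) \<Rightarrow> 'a \<Rightarrow> 'a \<Rightarrow> 'a" where
  "gauge_omega br \<omega>h \<xi> X = \<omega>h X + br X \<xi> + br (\<omega>h X) \<xi>"

end

theory Submission
  imports Defs
begin

text \<open>The covariant-derivative properties and the splitting formula are direct unfoldings:
  \<open>\<omega>h\<close> takes values in \<open>ker \<rho>\<close>, so \<open>\<phi>(\<omega>h X)\<close> contributes no symbol, and
  \<open>C(X) = \<nabla>\<^sub>\<rho>\<^sub>X - \<tau>(\<omega>r X)\<close>.  For the gauge behaviour, both \<open>\<nabla>\<^sub>\<rho>\<^sub>X\<close> and \<open>\<tau>(\<omega>r X)\<close>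
  change as \<open>N \<mapsto> N + t[N,\<xi>]\<close>; since \<open>\<phi>\<close> maps brackets to commutators and commutes with
  constant functions, \<open>\<phi>(N + t[N,\<xi>])(p - t\<phi>(\<xi>)p) = \<phi>(N)p - t\<phi>(\<xi>)\<phi>(N)p + O(t\<^sup>2)\<close>.\<close>

lemma der_R_of_real:
  assumes "der_R D" shows "D (of_real t) = 0"
proof -
  have "D (1 * 1) = 1 * D 1 + D 1 * 1" and "D (scaleR t 1) = scaleR t (D 1)"
    using assms unfolding der_R_def by blast+
  then show ?thesis by (simp add: of_real_def)
qed

lemma rmodule_additive: "rmodule actS \<Longrightarrow> additive (actS f)"
  unfolding rmodule_def by (simp add: additive.intro)

lemma representation_additive: "representation act br \<rho> actS \<phi> \<Longrightarrow> additive (\<phi> X)"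
  unfolding representation_def diffop_with_symbol_def by (simp add: additive.intro)

lemma representation_Leibniz:
  "representation act br \<rho> actS \<phi> \<Longrightarrow> \<phi> X (actS f p) = actS f (\<phi> X p) + actS (\<rho> X f) p"
  unfolding representation_def diffop_with_symbol_def by blast

lemma rmodule_act_zero:
  assumes "rmodule actS" shows "actS 0 p = 0"
proof -
  have "actS (0 + 0) p = actS 0 p + actS 0 p"
    using assms unfolding rmodule_def by blast
  then show ?thesis by simp
qed

lemma representation_commute_of_real:
  assumes "transitive_lie_algebroid act br \<rho>" and "rmodule actS"
    and "representation act br \<rho> actS \<phi>"
  shows "\<phi> X (actS (of_real t) p) = actS (of_real t) (\<phi> X p)"
proof -
  have "\<rho> X (of_real t) = 0"
    using assms(1) der_R_of_real unfolding transitive_lie_algebroid_def by blast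
  then show ?thesis
    by (simp add: representation_Leibniz[OF assms(3)] rmodule_act_zero[OF assms(2)])
qed

lemma representation_gauge_homogeneous:
  fixes act :: "'r::{comm_ring_1,real_algebra_1} \<Rightarrow> 'a::ab_group_add \<Rightarrow> 'a"
  assumes tla: "transitive_lie_algebroid act br \<rho>" and rm: "rmodule actS"
    and rep: "representation act br \<rho> actS \<phi>"
  shows "\<phi> (N + act (of_real t) (br N \<xi>)) (p - \<phi> (act (of_real t) \<xi>) p)
     = \<phi> N p - \<phi> (act (of_real t) \<xi>) (\<phi> N p)
       + actS (of_real (t\<^sup>2)) (- \<phi> (br N \<xi>) (\<phi> \<xi> p))"
proof -
  define c :: 'r where "c = of_real t"
  interpret S: additive "actS f" for f using rmodule_additive[OF rm] .
  interpret P: additive "\<phi> Y" for Y using representation_additive[OF rep] .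
  have \<phi>_add: "\<phi> (X + Y) q = \<phi> X q + \<phi> Y q" for X Y q
    using rep unfolding representation_def by blast
  have \<phi>_act: "\<phi> (act f X) q = actS f (\<phi> X q)" for f X q
    using rep unfolding representation_def by blast
  have \<phi>_br: "\<phi> (br X Y) q = \<phi> X (\<phi> Y q) - \<phi> Y (\<phi> X q)" for X Y q
    using rep unfolding representation_def by blast
  have \<phi>_c: "\<phi> Y (actS c q) = actS c (\<phi> Y q)" for Y q
    unfolding c_def by (rule representation_commute_of_real[OF tla rm rep])
  have act_mult: "actS (c * c) q = actS c (actS c q)" for q
    using rm unfolding rmodule_def by blast
  have "\<phi> (N + act c (br N \<xi>)) (p - \<phi> (act c \<xi>) p)
      = \<phi> N p - actS c (\<phi> N (\<phi> \<xi> p)) + actS c (\<phi> N (\<phi> \<xi> p) - \<phi> \<xi> (\<phi> N p))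
        - actS c (actS c (\<phi> (br N \<xi>) (\<phi> \<xi> p)))"
    by (simp add: \<phi>_add \<phi>_act \<phi>_br \<phi>_c P.diff S.add S.diff)
  also have "\<dots> = \<phi> N p - actS c (\<phi> \<xi> (\<phi> N p)) + actS (c * c) (- \<phi> (br N \<xi>) (\<phi> \<xi> p))"
    by (simp add: S.diff S.minus act_mult)
  also have "\<dots> = \<phi> N p - \<phi> (act (of_real t) \<xi>) (\<phi> N p)
      + actS (of_real (t\<^sup>2)) (- \<phi> (br N \<xi>) (\<phi> \<xi> p))"
    by (simp add: c_def \<phi>_act power2_eq_square)
  finally show ?thesis unfolding c_def .
qed

lemma gauge_omega_of_real:
  assumes "transitive_lie_algebroid act br \<rho>"
  shows "gauge_omega br \<omega>h (act (of_real t) \<xi>) X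
       = \<omega>h X + act (of_real t) (br (X + \<omega>h X) \<xi>)"
proof -
  have lie: "lie_bracket act br"
    using assms unfolding transitive_lie_algebroid_def by blast
  then have "br (X + \<omega>h X) (act (of_real t) \<xi>) = br X (act (of_real t) \<xi>) + br (\<omega>h X) (act (of_real t) \<xi>)"
    unfolding lie_bracket_def by blast
  moreover have "br Y (act (of_real t) \<xi>) = act (of_real t) (br Y \<xi>)" for Y
    using lie unfolding lie_bracket_def by blast
  ultimately show ?thesis
    unfolding gauge_omega_def by (simp add: add.assoc)
qed

lemma tau_gauge_omega:
  assumes "transitive_lie_algebroid act br \<rho>"
  shows "tau (gauge_omega br \<omega>h (act (of_real t) \<xi>)) \<eta>
       = tau \<omega>h \<eta> + act (of_real t) (br (tau \<omega>h \<eta>) \<xi>)"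
  unfolding gauge_omega_of_real[OF assms] tau_def by (simp add: add_ac)

lemma splitting_gauge_omega:
  assumes "transitive_lie_algebroid act br \<rho>"
    and "\<forall>X. nab (\<rho> X) = X + omega_ind \<omega>h \<omega>r X"
    and "\<forall>t Y. nabt t (\<rho> Y) = Y + omega_ind (gauge_omega br \<omega>h (act (of_real t) \<xi>)) \<omega>r Y"
  shows "nabt t (\<rho> X) = nab (\<rho> X) + act (of_real t) (br (nab (\<rho> X)) \<xi>)"
proof -
  have "rmodule act" and "lie_bracket act br"
    using assms(1) unfolding transitive_lie_algebroid_def by blast+
  then have "act (of_real t) (x + y) = act (of_real t) x + act (of_real t) y" for x y
    unfolding rmodule_def by blast
  moreover have "br (x + y) z = br x z + br y z" for x y z
    using \<open>lie_bracket act br\<close> unfolding lie_bracket_def by blast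
  ultimately show ?thesis
    using assms(2,3) tau_gauge_omega[OF assms(1)] gauge_omega_of_real[OF assms(1)]
    by (simp add: omega_ind_def add_ac)
qed

lemma nablaE_add_form:
  "gen_connection act \<rho> \<omega>h \<Longrightarrow> representation act br \<rho> actS \<phi> \<Longrightarrow>
    nablaE \<phi> \<omega>h p (X + Y) = nablaE \<phi> \<omega>h p X + nablaE \<phi> \<omega>h p Y"
  unfolding nablaE_def Chat_def gen_connection_def rlinear_def representation_def
  by (simp add: add_ac)

lemma nablaE_act_form:
  assumes "rmodule actS" "gen_connection act \<rho> \<omega>h" "representation act br \<rho> actS \<phi>"
  shows "nablaE \<phi> \<omega>h p (act f X) = actS f (nablaE \<phi> \<omega>h p X)"
  using assms unfolding nablaE_def Chat_def gen_connection_def rlinear_def representation_def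
    rmodule_def
  by simp

lemma nablaE_add_section:
  "representation act br \<rho> actS \<phi> \<Longrightarrow>
    nablaE \<phi> \<omega>h (p + q) X = nablaE \<phi> \<omega>h p X + nablaE \<phi> \<omega>h q X"
  unfolding nablaE_def using additive.add[OF representation_additive] by blast

lemma nablaE_Leibniz:
  assumes "transitive_lie_algebroid act br \<rho>" "gen_connection act \<rho> \<omega>h"
    "representation act br \<rho> actS \<phi>"
  shows "nablaE \<phi> \<omega>h (actS f p) X = actS f (nablaE \<phi> \<omega>h p X) + actS (\<rho> X f) p"
proof -
  have "\<rho> (X + \<omega>h X) = \<rho> X"
    using assms(1,2) unfolding transitive_lie_algebroid_def gen_connection_def kerL_def
    by fastforce
  then show ?thesis
    unfolding nablaE_def Chat_def by (simp add: representation_Leibniz[OF assms(3)])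
qed

lemma nablaE_eq_splitting:
  assumes "representation act br \<rho> actS \<phi>" and "\<forall>X. nab (\<rho> X) = X + omega_ind \<omega>h \<omega>r X"
  shows "nablaE \<phi> \<omega>h p X = \<phi> (nab (\<rho> X)) p - \<phi> (tau \<omega>h (\<omega>r X)) p"
  using assms unfolding nablaE_def Chat_def omega_ind_def representation_def
  by (simp add: add.assoc)

theorem proposition3p8:
  fixes act :: "'r::{comm_ring_1,real_algebra_1} \<Rightarrow> 'a::ab_group_add \<Rightarrow> 'a"
    and br :: "'a \<Rightarrow> 'a \<Rightarrow> 'a"
    and \<rho> :: "'a \<Rightarrow> 'r \<Rightarrow> 'r"
    and actS :: "'r \<Rightarrow> 's::ab_group_add \<Rightarrow> 's"
    and \<phi> :: "'a \<Rightarrow> 's \<Rightarrow> 's"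
    and \<omega>h \<omega>r :: "'a \<Rightarrow> 'a"
    and nab :: "('r \<Rightarrow> 'r) \<Rightarrow> 'a"
  assumes "transitive_lie_algebroid act br \<rho>"
    and "rmodule actS" and "fg_projective actS"
    and "representation act br \<rho> actS \<phi>"
    and "gen_connection act \<rho> \<omega>h"
    and "ordinary_connection_form act \<rho> \<omega>r"
    and "\<forall>X. nab (\<rho> X) = X + omega_ind \<omega>h \<omega>r X"
  shows
    "(\<forall>p X Y. nablaE \<phi> \<omega>h p (X + Y) = nablaE \<phi> \<omega>h p X + nablaE \<phi> \<omega>h p Y)
     \<and> (\<forall>p f X. nablaE \<phi> \<omega>h p (act f X) = actS f (nablaE \<phi> \<omega>h p X))
     \<and> (\<forall>p q X. nablaE \<phi> \<omega>h (p + q) X = nablaE \<phi> \<omega>h p X + nablaE \<phi> \<omega>h q X)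
     \<and> (\<forall>f p X. nablaE \<phi> \<omega>h (actS f p) X = actS f (nablaE \<phi> \<omega>h p X) + actS (\<rho> X f) p)
     \<and> (\<forall>p X. nablaE \<phi> \<omega>h p X = \<phi> (nab (\<rho> X)) p - \<phi> (tau \<omega>h (\<omega>r X)) p)
     \<and> (\<forall>\<xi> \<in> kerL \<rho>. \<forall>p X. \<forall>nabt :: real \<Rightarrow> ('r \<Rightarrow> 'r) \<Rightarrow> 'a.
          (\<forall>t Y. nabt t (\<rho> Y) = Y + omega_ind (gauge_omega br \<omega>h (act (of_real t) \<xi>)) \<omega>r Y) \<longrightarrow>
          (\<exists>Q. \<forall>t::real.
             \<phi> (nabt t (\<rho> X)) (p - \<phi> (act (of_real t) \<xi>) p)
             = \<phi> (nab (\<rho> X)) p - \<phi> (act (of_real t) \<xi>) (\<phi> (nab (\<rho> X)) p) + actS (of_real (t\<^sup>2)) Q)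
          \<and> (\<exists>Q. \<forall>t::real.
             - \<phi> (tau (gauge_omega br \<omega>h (act (of_real t) \<xi>)) (\<omega>r X)) (p - \<phi> (act (of_real t) \<xi>) p)
             = - \<phi> (tau \<omega>h (\<omega>r X)) p - \<phi> (act (of_real t) \<xi>) (- \<phi> (tau \<omega>h (\<omega>r X)) p)
               + actS (of_real (t\<^sup>2)) Q))"
proof (intro conjI allI ballI impI)
  show "nablaE \<phi> \<omega>h p (X + Y) = nablaE \<phi> \<omega>h p X + nablaE \<phi> \<omega>h p Y" for p X Y
    by (rule nablaE_add_form[OF assms(5,4)])
  show "nablaE \<phi> \<omega>h p (act f X) = actS f (nablaE \<phi> \<omega>h p X)" for p f X
    by (rule nablaE_act_form[OF assms(2,5,4)])
  show "nablaE \<phi> \<omega>h (p + q) X = nablaE \<phi> \<omega>h p X + nablaE \<phi> \<omega>h q X" for p q X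
    by (rule nablaE_add_section[OF assms(4)])
  show "nablaE \<phi> \<omega>h (actS f p) X = actS f (nablaE \<phi> \<omega>h p X) + actS (\<rho> X f) p" for f p X
    by (rule nablaE_Leibniz[OF assms(1,5,4)])
  show "nablaE \<phi> \<omega>h p X = \<phi> (nab (\<rho> X)) p - \<phi> (tau \<omega>h (\<omega>r X)) p" for p X
    by (rule nablaE_eq_splitting[OF assms(4,7)])
  note homogeneous = representation_gauge_homogeneous[OF assms(1,2,4)]
  interpret S: additive "actS f" for f using rmodule_additive[OF assms(2)] .
  interpret P: additive "\<phi> Y" for Y using representation_additive[OF assms(4)] .
  fix \<xi> p X and nabt :: "real \<Rightarrow> ('r \<Rightarrow> 'r) \<Rightarrow> 'a"
  assume "\<forall>t Y. nabt t (\<rho> Y) = Y + omega_ind (gauge_omega br \<omega>h (act (of_real t) \<xi>)) \<omega>r Y"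
  note nabt = splitting_gauge_omega[OF assms(1,7) this]
  show "\<exists>Q. \<forall>t::real. \<phi> (nabt t (\<rho> X)) (p - \<phi> (act (of_real t) \<xi>) p)
      = \<phi> (nab (\<rho> X)) p - \<phi> (act (of_real t) \<xi>) (\<phi> (nab (\<rho> X)) p) + actS (of_real (t\<^sup>2)) Q"
    unfolding nabt homogeneous by blast
  show "\<exists>Q. \<forall>t::real.
      - \<phi> (tau (gauge_omega br \<omega>h (act (of_real t) \<xi>)) (\<omega>r X)) (p - \<phi> (act (of_real t) \<xi>) p)
      = - \<phi> (tau \<omega>h (\<omega>r X)) p - \<phi> (act (of_real t) \<xi>) (- \<phi> (tau \<omega>h (\<omega>r X)) p)
        + actS (of_real (t\<^sup>2)) Q"
    unfolding tau_gauge_omega[OF assms(1)] homogeneous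
    by (intro exI[of _ "\<phi> (br (tau \<omega>h (\<omega>r X)) \<xi>) (\<phi> \<xi> p)"] allI) (simp add: P.minus S.minus)
qed

end
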